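(* Let $k,l$ be positive integers. For $\operatorname{Re}s>1$, $$\sum_{n_{l+1}\mid n_l^k\mid\cdots\mid n_1^k}(n_1^k\cdots n_l^k\,n_{l+1})^{-s}=F_{k,l}(s)\prod_{j=2}^{l+1}\zeta(jks).$$
   Context: The sum is over all $(l+1)$-tuples of positive integers with $n_{l+1}\mid n_l^k\mid n_{l-1}^k\mid\cdots\mid n_1^k$. A positive integer $n$ is an $l$-step $k$-powerful number if for every prime $p$, $\operatorname{ord}_pn\in\{0,k,2k,\dots,(l-1)k\}$ or $\operatorname{ord}_pn\ge lk$ (here $\operatorname{ord}_pn$ is the exponent of $p$ in $n$). $F_{k,l}(s):=\sum_{n}n^{-s}$, summed over all $l$-step $k$-powerful numbers $n$. $\zeta$ is the Riemann zeta function. *)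

theory Defs
  imports "HOL-Analysis.Analysis" "HOL-Computational_Algebra.Primes"
begin

text \<open>Riemann zeta function on the half-plane Re s > 1, given by its Dirichlet series.\<close>
definition zeta :: "complex \<Rightarrow> complex" where
  "zeta s = (\<Sum>\<^sub>\<infinity> n\<in>{1::nat..}. of_nat n powr (-s))"

definition step_powerful :: "nat \<Rightarrow> nat \<Rightarrow> nat \<Rightarrow> bool" where
  "step_powerful k l n \<longleftrightarrow> n > 0 \<and>
     (\<forall>p::nat. prime p \<longrightarrow>
        (multiplicity p n \<in> {j * k | j. j < l} \<or> multiplicity p n \<ge> l * k))"

definition F :: "nat \<Rightarrow> nat \<Rightarrow> complex \<Rightarrow> complex" where
  "F k l s = (\<Sum>\<^sub>\<infinity> n\<in>{n. step_powerful k l n}. of_nat n powr (-s))"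

definition tuples :: "nat \<Rightarrow> nat \<Rightarrow> (nat \<Rightarrow> nat) set" where
  "tuples k l = {n \<in> {1..Suc l} \<rightarrow>\<^sub>E {1..}.
      n (Suc l) dvd n l ^ k \<and> (\<forall>i\<in>{2..l}. n i ^ k dvd n (i - 1) ^ k)}"

end

theory Submission
  imports Defs
begin

text \<open>
  Everything can be read off prime by prime.  Fix a prime p and let a_i be the exponent of p
  in n_i.  The chain n_(l+1) | n_l^k | ... | n_1^k says exactly that
  a_1 \<ge> ... \<ge> a_l and a_(l+1) \<le> k a_l, and p occurs in n_1^k ... n_l^k n_(l+1) with
  exponent k (a_1 + ... + a_l) + a_(l+1).  Multiplying out F_(k,l)(s) \<Prod> \<zeta>(jks) gives the sum of
  (g_1 g_2^(2k) ... g_(l+1)^((l+1)k))^(-s) over all tuples with g_1 l-step k-powerful; the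
  exponents e_j of p in g_j satisfy e_1 \<in> {0, k, ..., (l-1)k} \<union> [lk, \<infinity>), and p occurs in the
  product with exponent e_1 + \<Sum>(j \<ge> 2) j k e_j.

  The two sets of exponent vectors are in weight-preserving bijection.  Write
  a_(l+1) = k q + r with 0 \<le> r < k and let \<delta> = [r \<noteq> 0] be the carry; then
  m = (a_1 - \<delta>, ..., a_l - \<delta>, q, 0) is decreasing, and a corresponds to
  e_j = m_j - m_(j+1) for j \<ge> 2 and e_1 = k (m_1 - m_2) + \<delta> l k + r.  Applied at every prime
  at once, this bijection identifies the admissible tuples with the product set indexing the
  right-hand side and matches the summands; the sum over the product set then factors.
\<close>

section \<open>Prime multiplicities, finite sums and Dirichlet series\<close>

lemma dvd_iff_multiplicity_le:
  fixes x y :: "'a :: factorial_semiring"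
  assumes "x \<noteq> 0" "y \<noteq> 0"
  shows "x dvd y \<longleftrightarrow> (\<forall>p. prime p \<longrightarrow> multiplicity p x \<le> multiplicity p y)"
  using assms by (auto intro: dvd_imp_multiplicity_le multiplicity_le_imp_dvd)

lemma multiplicity_prod_power:
  fixes n :: "'b \<Rightarrow> 'a :: factorial_semiring"
  assumes "finite A" "\<And>i. i \<in> A \<Longrightarrow> n i \<noteq> 0" "prime p"
  shows "multiplicity p (\<Prod>i\<in>A. n i ^ c i) = (\<Sum>i\<in>A. c i * multiplicity p (n i))"
  using assms
  by (subst prime_elem_multiplicity_prod_distrib)
     (auto simp: prime_elem_multiplicity_power_distrib intro!: sum.cong)

lemma sum_tail_sums:
  fixes f :: "nat \<Rightarrow> 'a :: comm_semiring_1"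
  shows "(\<Sum>i\<in>{1..N}. \<Sum>j\<in>{i..N}. f j) = (\<Sum>j\<in>{1..N}. of_nat j * f j)"
proof (induction N)
  case (Suc N)
  have "(\<Sum>i\<in>{1..Suc N}. \<Sum>j\<in>{i..Suc N}. f j) = (\<Sum>i\<in>{1..Suc N}. (\<Sum>j\<in>{i..N}. f j) + f (Suc N))"
    by (intro sum.cong) auto
  also have "\<dots> = (\<Sum>i\<in>{1..N}. \<Sum>j\<in>{i..N}. f j) + of_nat (Suc N) * f (Suc N)"
    by (simp add: sum.distrib)
  finally show ?case
    using Suc by simp
qed simp

lemma sum_diff_Suc_telescope:
  fixes m :: "nat \<Rightarrow> nat"
  assumes "\<And>j. j \<in> {i..n} \<Longrightarrow> m (Suc j) \<le> m j" "i \<le> Suc n"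
  shows "(\<Sum>j\<in>{i..n}. m j - m (Suc j)) = m i - m (Suc n)"
proof -
  have "m (Suc n) \<le> m i"
    using assms by (rule lift_Suc_antimono_le_ivl[of "{i..n}"]) auto
  have "int (\<Sum>j\<in>{i..n}. m j - m (Suc j)) = (\<Sum>j\<in>{i..n}. int (m j) - int (m (Suc j)))"
    unfolding of_nat_sum using assms(1) by (intro sum.cong) auto
  also have "\<dots> = int (m i) - int (m (Suc n))"
    using sum_natinterval_diff[of "\<lambda>j. int (m j)" i n] assms(2) by (cases "i = Suc n") auto
  also have "\<dots> = int (m i - m (Suc n))"
    using \<open>m (Suc n) \<le> m i\<close> by simp
  finally show ?thesis
    by (simp only: of_nat_eq_iff)
qed

lemma ball_Suc_atLeastAtMost: "(\<forall>i\<in>{Suc m..n}. P i) \<longleftrightarrow> (\<forall>i\<in>{m..<n}. P (Suc i))"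
proof -
  have "{Suc m..n} = Suc ` {m..<n}"
    by (simp add: atLeastLessThanSuc_atLeastAtMost)
  then show ?thesis
    by (simp only: Ball_image_comp comp_def)
qed

lemma of_nat_prod_power_powr:
  assumes "finite A" "\<And>j. j \<in> A \<Longrightarrow> g j > (0::nat)"
  shows "(of_nat (\<Prod>j\<in>A. g j ^ c j) :: complex) powr s =
    (\<Prod>j\<in>A. of_nat (g j) powr (of_nat (c j) * s))"
proof -
  have powr_nat: "(of_nat m :: complex) powr z = exp (z * of_real (ln (real m)))" if "m > 0" for m z
    using that by (simp add: powr_def)
  have "(\<Prod>j\<in>A. g j ^ c j) > 0"
    using assms by (simp add: prod_pos)
  then have "(of_nat (\<Prod>j\<in>A. g j ^ c j) :: complex) powr s =
      exp (s * of_real (ln (real (\<Prod>j\<in>A. g j ^ c j))))"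
    by (rule powr_nat)
  also have "ln (real (\<Prod>j\<in>A. g j ^ c j)) = (\<Sum>j\<in>A. real (c j) * ln (real (g j)))"
    using assms by (simp add: ln_prod ln_realpow)
  also have "exp (s * of_real (\<Sum>j\<in>A. real (c j) * ln (real (g j)))) =
      (\<Prod>j\<in>A. exp (of_nat (c j) * s * of_real (ln (real (g j)))))"
    using assms(1) by (simp add: exp_sum sum_distrib_left mult.assoc mult.left_commute)
  also have "\<dots> = (\<Prod>j\<in>A. of_nat (g j) powr (of_nat (c j) * s))"
    using assms by (intro prod.cong) (simp_all add: powr_nat)
  finally show ?thesis .
qed

lemma summable_on_norm_of_nat_powr:
  assumes "Re z > 1"
  shows "(\<lambda>n::nat. norm ((of_nat n :: complex) powr (- z))) summable_on A"
proof -
  have "summable (\<lambda>n. real n powr (- Re z))"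
    using assms by (simp add: summable_real_powr_iff)
  then have "(\<lambda>n. real n powr (- Re z)) summable_on UNIV"
    by (simp add: summable_on_UNIV_nonneg_real_iff)
  moreover have "norm ((of_nat n :: complex) powr (- z)) = real n powr (- Re z)" for n
    by (simp add: norm_powr_real_powr)
  ultimately show ?thesis
    by (auto intro: summable_on_subset)
qed

lemma has_sum_prod_PiE:
  fixes f :: "'a \<Rightarrow> 'b \<Rightarrow> 'c :: {real_normed_field, banach, second_countable_topology}"
  assumes "finite A" "\<And>x. x \<in> A \<Longrightarrow> countable (B x)"
    and "\<And>x. x \<in> A \<Longrightarrow> (\<lambda>y. norm (f x y)) summable_on B x"
  shows "((\<lambda>g. \<Prod>x\<in>A. f x (g x)) has_sum (\<Prod>x\<in>A. infsum (f x) (B x))) (PiE A B)"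
proof -
  have "Infinite_Set_Sum.abs_summable_on (\<lambda>g. \<Prod>x\<in>A. f x (g x)) (PiE A B)"
    using assms by (intro abs_summable_on_prod_PiE) (auto simp: abs_summable_equivalent)
  then have "(\<lambda>g. \<Prod>x\<in>A. f x (g x)) summable_on PiE A B"
    by (simp add: abs_summable_equivalent abs_summable_summable)
  then show ?thesis
    using infsum_prod_PiE_abs[of A f B] assms(1,3) by (metis has_sum_infsum)
qed

section \<open>Tuples described by their prime exponent vectors\<close>

definition exponent_vector :: "nat set \<Rightarrow> nat \<Rightarrow> (nat \<Rightarrow> nat) \<Rightarrow> nat \<Rightarrow> nat" where
  "exponent_vector I p n = (\<lambda>i\<in>I. multiplicity p (n i))"

definition tuples_with_exponents :: "nat set \<Rightarrow> (nat \<Rightarrow> nat) set \<Rightarrow> (nat \<Rightarrow> nat) set" where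
  "tuples_with_exponents I E =
     {n \<in> I \<rightarrow>\<^sub>E {1..}. \<forall>p. prime p \<longrightarrow> exponent_vector I p n \<in> E}"

definition exponent_map :: "nat set \<Rightarrow> ((nat \<Rightarrow> nat) \<Rightarrow> nat \<Rightarrow> nat) \<Rightarrow> bool" where
  "exponent_map I \<phi> \<longleftrightarrow> \<phi> (\<lambda>i\<in>I. 0) = (\<lambda>i\<in>I. 0) \<and> (\<forall>a. \<phi> a \<in> extensional I)"

text \<open>The product may range over the primes dividing some \<open>n j\<close> only because \<open>\<phi>\<close> fixes
  the zero vector.\<close>
definition lift_exponent_map ::
    "nat set \<Rightarrow> ((nat \<Rightarrow> nat) \<Rightarrow> nat \<Rightarrow> nat) \<Rightarrow> (nat \<Rightarrow> nat) \<Rightarrow> nat \<Rightarrow> nat" where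
  "lift_exponent_map I \<phi> n =
     (\<lambda>i\<in>I. \<Prod>p\<in>(\<Union>j\<in>I. prime_factors (n j)). p ^ \<phi> (exponent_vector I p n) i)"

lemma lift_exponent_map_in_PiE:
  assumes "finite I"
  shows "lift_exponent_map I \<phi> n \<in> I \<rightarrow>\<^sub>E {1..}"
proof -
  have "(\<Prod>p\<in>(\<Union>j\<in>I. prime_factors (n j)). p ^ e p) > 0" for e :: "nat \<Rightarrow> nat"
    using assms by (intro prod_pos) (auto simp: prime_gt_0_nat in_prime_factors_imp_prime)
  then show ?thesis
    unfolding lift_exponent_map_def by (auto simp: Suc_le_eq)
qed

lemma exponent_vector_lift_exponent_map:
  assumes "finite I" "exponent_map I \<phi>" "n \<in> I \<rightarrow>\<^sub>E {1..}" "prime p"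
  shows "exponent_vector I p (lift_exponent_map I \<phi> n) = \<phi> (exponent_vector I p n)"
proof (rule extensionalityI)
  show "\<phi> (exponent_vector I p n) \<in> extensional I"
    using assms(2) by (simp add: exponent_map_def)
  fix i assume "i \<in> I"
  let ?S = "\<Union>j\<in>I. prime_factors (n j)"
  have "multiplicity p (lift_exponent_map I \<phi> n i) =
          multiplicity p (\<Prod>q\<in>?S. q ^ \<phi> (exponent_vector I q n) i)"
    using \<open>i \<in> I\<close> by (simp add: lift_exponent_map_def)
  also have "\<dots> = (if p \<in> ?S then \<phi> (exponent_vector I p n) i else 0)"
    using assms(1,4) by (intro multiplicity_prod_prime_powers) auto
  finally have "multiplicity p (lift_exponent_map I \<phi> n i) =
      (if p \<in> ?S then \<phi> (exponent_vector I p n) i else 0)" .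
  moreover have "exponent_vector I p n = (\<lambda>i\<in>I. 0)" if "p \<notin> ?S"
    unfolding exponent_vector_def
  proof (rule restrict_ext)
    fix j assume "j \<in> I"
    then have "n j > 0" "p \<notin> prime_factors (n j)"
      using assms(3) that by (auto simp: Suc_le_eq)
    then show "multiplicity p (n j) = 0"
      using assms(4) by (auto intro: not_dvd_imp_multiplicity_0 simp: prime_factors_dvd)
  qed
  ultimately show "exponent_vector I p (lift_exponent_map I \<phi> n) i = \<phi> (exponent_vector I p n) i"
    using \<open>i \<in> I\<close> assms(2) by (auto simp: exponent_vector_def exponent_map_def)
qed (simp add: exponent_vector_def)

lemma eq_by_exponent_vectors:
  assumes "n \<in> I \<rightarrow>\<^sub>E {1..}" "m \<in> I \<rightarrow>\<^sub>E {1..}"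
    and "\<And>p. prime p \<Longrightarrow> exponent_vector I p n = exponent_vector I p m"
  shows "n = m"
proof (rule extensionalityI)
  fix i assume "i \<in> I"
  show "n i = m i"
  proof (rule multiplicity_eq_nat)
    show "n i > 0" "m i > 0"
      using assms(1,2) \<open>i \<in> I\<close> by (auto simp: Suc_le_eq)
    fix p :: nat assume "prime p"
    then show "multiplicity p (n i) = multiplicity p (m i)"
      using fun_cong[OF assms(3), of p i] \<open>i \<in> I\<close> by (simp add: exponent_vector_def)
  qed
qed (use assms in \<open>auto simp: PiE_def\<close>)

lemma lift_exponent_map_in_tuples_with_exponents:
  assumes "finite I" "exponent_map I \<phi>" "\<phi> ` E \<subseteq> E'" "n \<in> tuples_with_exponents I E"
  shows "lift_exponent_map I \<phi> n \<in> tuples_with_exponents I E'"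
proof -
  have n: "n \<in> I \<rightarrow>\<^sub>E {1..}" "\<And>p. prime p \<Longrightarrow> exponent_vector I p n \<in> E"
    using assms(4) by (auto simp: tuples_with_exponents_def)
  show ?thesis
    unfolding tuples_with_exponents_def
    using lift_exponent_map_in_PiE[OF assms(1)] exponent_vector_lift_exponent_map[OF assms(1,2) n(1)]
      n(2) assms(3) by blast
qed

lemma lift_exponent_map_inverse:
  assumes "finite I" "exponent_map I \<phi>" "exponent_map I \<psi>"
    and "\<And>a. a \<in> E \<Longrightarrow> \<psi> (\<phi> a) = a" "n \<in> tuples_with_exponents I E"
  shows "lift_exponent_map I \<psi> (lift_exponent_map I \<phi> n) = n"
proof (rule eq_by_exponent_vectors)
  show "lift_exponent_map I \<psi> (lift_exponent_map I \<phi> n) \<in> I \<rightarrow>\<^sub>E {1..}"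
    using assms(1) by (rule lift_exponent_map_in_PiE)
  show n: "n \<in> I \<rightarrow>\<^sub>E {1..}"
    using assms(5) by (simp add: tuples_with_exponents_def)
  fix p :: nat assume "prime p"
  then show "exponent_vector I p (lift_exponent_map I \<psi> (lift_exponent_map I \<phi> n)) =
      exponent_vector I p n"
    using assms n lift_exponent_map_in_PiE[OF assms(1)]
    by (simp add: exponent_vector_lift_exponent_map tuples_with_exponents_def)
qed

lemma bij_betw_lift_exponent_map:
  assumes "finite I" "exponent_map I \<phi>" "exponent_map I \<psi>"
    and "\<phi> ` E \<subseteq> E'" "\<psi> ` E' \<subseteq> E"
    and "\<And>a. a \<in> E \<Longrightarrow> \<psi> (\<phi> a) = a" "\<And>b. b \<in> E' \<Longrightarrow> \<phi> (\<psi> b) = b"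
  shows "bij_betw (lift_exponent_map I \<phi>) (tuples_with_exponents I E) (tuples_with_exponents I E')"
proof (rule bij_betw_byWitness[where f' = "lift_exponent_map I \<psi>"])
  show "\<forall>n\<in>tuples_with_exponents I E. lift_exponent_map I \<psi> (lift_exponent_map I \<phi> n) = n"
    using lift_exponent_map_inverse[of I \<phi> \<psi> E] assms(1,2,3,6) by blast
  show "\<forall>n\<in>tuples_with_exponents I E'. lift_exponent_map I \<phi> (lift_exponent_map I \<psi> n) = n"
    using lift_exponent_map_inverse[of I \<psi> \<phi> E'] assms(1,3,2,7) by blast
  show "lift_exponent_map I \<phi> ` tuples_with_exponents I E \<subseteq> tuples_with_exponents I E'"
    by (intro image_subsetI lift_exponent_map_in_tuples_with_exponents[OF assms(1,2,4)])
  show "lift_exponent_map I \<psi> ` tuples_with_exponents I E' \<subseteq> tuples_with_exponents I E"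
    by (intro image_subsetI lift_exponent_map_in_tuples_with_exponents[OF assms(1,3,5)])
qed

section \<open>A weight-preserving bijection of exponent vectors\<close>

definition step_powerful_exponent :: "nat \<Rightarrow> nat \<Rightarrow> nat \<Rightarrow> bool" where
  "step_powerful_exponent k l m \<longleftrightarrow> m \<in> {j * k | j. j < l} \<or> m \<ge> l * k"

definition chain_exponents :: "nat \<Rightarrow> nat \<Rightarrow> (nat \<Rightarrow> nat) set" where
  "chain_exponents k l =
     {a \<in> extensional {1..Suc l}. (\<forall>i\<in>{1..<l}. a (Suc i) \<le> a i) \<and> a (Suc l) \<le> k * a l}"

definition powerful_exponents :: "nat \<Rightarrow> nat \<Rightarrow> (nat \<Rightarrow> nat) set" where
  "powerful_exponents k l = {e \<in> extensional {1..Suc l}. step_powerful_exponent k l (e 1)}"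

definition chain_weight :: "nat \<Rightarrow> nat \<Rightarrow> (nat \<Rightarrow> nat) \<Rightarrow> nat" where
  "chain_weight k l a = (\<Sum>i\<in>{1..l}. k * a i) + a (Suc l)"

definition powerful_weight :: "nat \<Rightarrow> nat \<Rightarrow> (nat \<Rightarrow> nat) \<Rightarrow> nat" where
  "powerful_weight k l e = e 1 + (\<Sum>j\<in>{2..Suc l}. j * k * e j)"

definition carry :: "nat \<Rightarrow> nat \<Rightarrow> nat" where
  "carry k x = (if x mod k = 0 then 0 else 1)"

text \<open>The decreasing sequence m of the bijection, continued by zeros.\<close>
definition chain_levels :: "nat \<Rightarrow> nat \<Rightarrow> (nat \<Rightarrow> nat) \<Rightarrow> nat \<Rightarrow> nat" where
  "chain_levels k l a i =
     (if i \<le> l then a i - carry k (a (Suc l)) else if i = Suc l then a (Suc l) div k else 0)"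

definition to_powerful :: "nat \<Rightarrow> nat \<Rightarrow> (nat \<Rightarrow> nat) \<Rightarrow> nat \<Rightarrow> nat" where
  "to_powerful k l a = (\<lambda>j\<in>{1..Suc l}.
     if j = 1 then k * (chain_levels k l a 1 - chain_levels k l a 2)
                   + carry k (a (Suc l)) * (l * k) + a (Suc l) mod k
     else chain_levels k l a j - chain_levels k l a (Suc j))"

text \<open>Inverse direction: m_1 - m_2 is read off e_1, and m is recovered from its differences as
  tail sums.\<close>
definition powerful_quotient :: "nat \<Rightarrow> nat \<Rightarrow> (nat \<Rightarrow> nat) \<Rightarrow> nat" where
  "powerful_quotient k l e = (e 1 - carry k (e 1) * (l * k)) div k"

definition powerful_levels :: "nat \<Rightarrow> nat \<Rightarrow> (nat \<Rightarrow> nat) \<Rightarrow> nat \<Rightarrow> nat" where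
  "powerful_levels k l e i = (\<Sum>j\<in>{i..Suc l}. (e(1 := powerful_quotient k l e)) j)"

definition to_chain :: "nat \<Rightarrow> nat \<Rightarrow> (nat \<Rightarrow> nat) \<Rightarrow> nat \<Rightarrow> nat" where
  "to_chain k l e = (\<lambda>i\<in>{1..Suc l}.
     if i \<le> l then powerful_levels k l e i + carry k (e 1)
     else k * powerful_levels k l e (Suc l) + e 1 mod k)"

context
  fixes k l :: nat
begin

lemma step_powerful_exponent_decompose:
  assumes "step_powerful_exponent k l x"
  shows "x = k * ((x - carry k x * (l * k)) div k) + carry k x * (l * k) + x mod k"
proof (cases "x mod k = 0")
  case True
  then show ?thesis using mult_div_mod_eq[of k x] by (simp add: carry_def)
next
  case False
  then have "x \<notin> {j * k | j. j < l}" by auto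
  then have "l * k \<le> x" using assms by (auto simp: step_powerful_exponent_def)
  moreover have "(x - l * k) mod k = x mod k"
    by (metis \<open>l * k \<le> x\<close> le_add_diff_inverse mod_mult_self3)
  ultimately show ?thesis
    using False div_mult_mod_eq[of "x - l * k" k] by (simp add: carry_def algebra_simps)
qed

lemma step_powerful_exponent_compose:
  assumes "r < k"
  shows "step_powerful_exponent k l (k * t + carry k r * (l * k) + r)"
  using assms by (cases "t < l") (auto simp: step_powerful_exponent_def carry_def mult.commute)

lemma mult_add_mod_less:
  assumes "r < k"
  shows "(k * t + c * (l * k) + r) mod k = r"
proof -
  have "k * t + c * (l * k) + r = r + k * (t + c * l)" by (simp add: algebra_simps)
  then show ?thesis using assms by simp
qed

lemma chain_exponents_antitone:
  assumes "a \<in> chain_exponents k l" "1 \<le> i" "i \<le> j" "j \<le> l"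
  shows "a j \<le> a i"
  using assms by (intro lift_Suc_antimono_le_ivl[of "{1..<l}" a i j]) (auto simp: chain_exponents_def)

lemma powerful_levels_Suc:
  assumes "i \<le> Suc l"
  shows "powerful_levels k l e i =
           (e(1 := powerful_quotient k l e)) i + powerful_levels k l e (Suc i)"
  unfolding powerful_levels_def using assms by (subst sum.atLeast_Suc_atMost) auto

lemma to_powerful_first:
  "to_powerful k l a 1 = k * (chain_levels k l a 1 - chain_levels k l a 2)
     + carry k (a (Suc l)) * (l * k) + a (Suc l) mod k"
  unfolding to_powerful_def by simp

lemma to_powerful_later:
  assumes "2 \<le> j" "j \<le> Suc l"
  shows "to_powerful k l a j = chain_levels k l a j - chain_levels k l a (Suc j)"
  using assms unfolding to_powerful_def by simp

lemma to_chain_last: "to_chain k l e (Suc l) = k * powerful_levels k l e (Suc l) + e 1 mod k"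
  unfolding to_chain_def by simp

lemma to_chain_upto:
  assumes "1 \<le> i" "i \<le> l"
  shows "to_chain k l e i = powerful_levels k l e i + carry k (e 1)"
  using assms unfolding to_chain_def by simp

lemma exponent_map_to_chain: "exponent_map {1..Suc l} (to_chain k l)"
proof -
  have "powerful_levels k l (\<lambda>i\<in>{1..Suc l}. 0) i = 0" if "1 \<le> i" for i
    using that unfolding powerful_levels_def powerful_quotient_def carry_def
    by (intro sum.neutral) auto
  then show ?thesis
    unfolding exponent_map_def to_chain_def carry_def by (auto intro!: restrict_ext)
qed

lemma exponent_map_to_powerful: "exponent_map {1..Suc l} (to_powerful k l)"
  unfolding exponent_map_def to_powerful_def chain_levels_def carry_def
  by (auto intro!: restrict_ext)

context
  assumes k_pos: "k > 0" and l_pos: "l > 0"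
begin

lemma carry_le_chain_exponent:
  assumes "a \<in> chain_exponents k l" "1 \<le> i" "i \<le> l"
  shows "carry k (a (Suc l)) \<le> a i"
proof -
  have "a (Suc l) \<le> k * a l" using assms(1) by (simp add: chain_exponents_def)
  then have "carry k (a (Suc l)) \<le> a l" by (cases "a l") (auto simp: carry_def)
  then show ?thesis using chain_exponents_antitone[OF assms(1,2,3)] l_pos by simp
qed

lemma chain_levels_Suc_le:
  assumes "a \<in> chain_exponents k l" "1 \<le> i"
  shows "chain_levels k l a (Suc i) \<le> chain_levels k l a i"
proof -
  consider "Suc i \<le> l" | "i = l" | "i > l" by linarith
  then show ?thesis
  proof cases
    case 1
    then show ?thesis
      using chain_exponents_antitone[OF assms, of "Suc i"] by (simp add: chain_levels_def)
  next
    case 2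
    have le: "a (Suc l) \<le> k * a l" using assms(1) by (simp add: chain_exponents_def)
    have "a (Suc l) div k + carry k (a (Suc l)) \<le> a l"
    proof (cases "a (Suc l) mod k = 0")
      case True
      then have "k * (a (Suc l) div k) \<le> k * a l"
        using le mult_div_mod_eq[of k "a (Suc l)"] by simp
      then show ?thesis using True k_pos by (simp add: carry_def)
    next
      case False
      then have "k * (a (Suc l) div k) < k * a l"
        using le mult_div_mod_eq[of k "a (Suc l)"] by linarith
      then show ?thesis using False by (simp add: carry_def)
    qed
    then show ?thesis using 2 by (simp add: chain_levels_def)
  next
    case 3
    then show ?thesis by (simp add: chain_levels_def)
  qed
qed

lemma to_powerful_first_mod: "to_powerful k l a 1 mod k = a (Suc l) mod k"
  unfolding to_powerful_first using k_pos by (simp add: mult_add_mod_less)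

lemma carry_to_powerful_first: "carry k (to_powerful k l a 1) = carry k (a (Suc l))"
  unfolding carry_def to_powerful_first_mod ..

lemma powerful_quotient_to_powerful:
  "powerful_quotient k l (to_powerful k l a) = chain_levels k l a 1 - chain_levels k l a 2"
proof -
  have "a (Suc l) mod k < k" using k_pos by simp
  then show ?thesis
    unfolding powerful_quotient_def carry_to_powerful_first unfolding to_powerful_first by (simp add: mult_add_mod_less)
qed

lemma powerful_levels_to_powerful:
  assumes "a \<in> chain_exponents k l" "1 \<le> i" "i \<le> Suc l"
  shows "powerful_levels k l (to_powerful k l a) i = chain_levels k l a i"
proof -
  let ?m = "chain_levels k l a"
  have "((to_powerful k l a)(1 := powerful_quotient k l (to_powerful k l a))) j = ?m j - ?m (Suc j)"
    if "1 \<le> j" "j \<le> Suc l" for j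
    using that to_powerful_later[of j a] unfolding powerful_quotient_to_powerful
    by (cases "j = 1") (auto simp: numeral_2_eq_2)
  then have "powerful_levels k l (to_powerful k l a) i = (\<Sum>j\<in>{i..Suc l}. ?m j - ?m (Suc j))"
    unfolding powerful_levels_def using assms(2) by (intro sum.cong) auto
  also have "\<dots> = ?m i - ?m (Suc (Suc l))"
    using assms by (intro sum_diff_Suc_telescope chain_levels_Suc_le) auto
  finally show ?thesis by (simp add: chain_levels_def)
qed

lemma chain_levels_to_chain:
  assumes "1 \<le> i" "i \<le> Suc (Suc l)"
  shows "chain_levels k l (to_chain k l e) i = powerful_levels k l e i"
proof -
  have "carry k (to_chain k l e (Suc l)) = carry k (e 1)"
    unfolding to_chain_last carry_def using k_pos by simp
  moreover have "to_chain k l e (Suc l) div k = powerful_levels k l e (Suc l)"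
    unfolding to_chain_last using k_pos by simp
  moreover have "powerful_levels k l e (Suc (Suc l)) = 0"
    unfolding powerful_levels_def by simp
  ultimately show ?thesis
    using assms to_chain_upto[of i e] unfolding chain_levels_def by (auto simp: le_Suc_eq)
qed

lemma to_chain_to_powerful:
  assumes "a \<in> chain_exponents k l"
  shows "to_chain k l (to_powerful k l a) = a"
proof (rule extensionalityI)
  fix i assume i: "i \<in> {1..Suc l}"
  show "to_chain k l (to_powerful k l a) i = a i"
  proof (cases "i \<le> l")
    case True
    have "1 \<le> i" using i by simp
    then show ?thesis
      using True powerful_levels_to_powerful[OF assms, of i] carry_le_chain_exponent[OF assms, of i]
      unfolding to_chain_upto[OF \<open>1 \<le> i\<close> True] carry_to_powerful_first
      by (simp add: chain_levels_def)
  next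
    case False
    have "to_chain k l (to_powerful k l a) (Suc l) = a (Suc l)"
      using powerful_levels_to_powerful[OF assms, of "Suc l"]
      unfolding to_chain_last to_powerful_first_mod by (simp add: chain_levels_def)
    moreover have "i = Suc l" using i False by simp
    ultimately show ?thesis by simp
  qed
qed (use assms in \<open>auto simp: to_chain_def chain_exponents_def\<close>)

lemma to_powerful_to_chain:
  assumes "e \<in> powerful_exponents k l"
  shows "to_powerful k l (to_chain k l e) = e"
proof (rule extensionalityI)
  let ?m = "chain_levels k l (to_chain k l e)"
  have levels: "?m i - ?m (Suc i) = (e(1 := powerful_quotient k l e)) i"
    if "1 \<le> i" "i \<le> Suc l" for i
    using that powerful_levels_Suc[of i e] by (simp add: chain_levels_to_chain)
  fix j assume j: "j \<in> {1..Suc l}"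
  show "to_powerful k l (to_chain k l e) j = e j"
  proof (cases "j = 1")
    case True
    have "carry k (to_chain k l e (Suc l)) = carry k (e 1)"
      "to_chain k l e (Suc l) mod k = e 1 mod k"
      unfolding to_chain_last carry_def using k_pos by simp_all
    then have "to_powerful k l (to_chain k l e) 1 =
        k * powerful_quotient k l e + carry k (e 1) * (l * k) + e 1 mod k"
      using levels[of 1] unfolding to_powerful_first by (simp add: numeral_2_eq_2)
    also have "\<dots> = e 1"
      using assms step_powerful_exponent_decompose[of "e 1"]
      unfolding powerful_exponents_def powerful_quotient_def by simp
    finally show ?thesis using True by simp
  next
    case False
    then show ?thesis using j levels[of j] to_powerful_later[of j] by simp
  qed
qed (use assms in \<open>auto simp: to_powerful_def powerful_exponents_def\<close>)

lemma to_powerful_in_powerful_exponents: "to_powerful k l a \<in> powerful_exponents k l"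
proof -
  have "carry k (a (Suc l)) = carry k (a (Suc l) mod k)" "a (Suc l) mod k < k"
    unfolding carry_def using k_pos by simp_all
  then have "step_powerful_exponent k l (to_powerful k l a 1)"
    unfolding to_powerful_first by (simp only: step_powerful_exponent_compose)
  then show ?thesis
    unfolding powerful_exponents_def to_powerful_def by simp
qed

lemma to_chain_in_chain_exponents: "to_chain k l e \<in> chain_exponents k l"
proof -
  let ?M = "powerful_levels k l e"
  have M_antitone: "?M (Suc i) \<le> ?M i" if "i \<le> Suc l" for i
    using powerful_levels_Suc[OF that] by simp
  have "1 \<le> l" using l_pos by simp
  have "k * ?M (Suc l) + e 1 mod k \<le> k * (?M (Suc l) + carry k (e 1))"
    using k_pos by (simp add: carry_def distrib_left less_imp_le)
  also have "\<dots> \<le> k * (?M l + carry k (e 1))"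
    using M_antitone[of l] by simp
  finally have "to_chain k l e (Suc l) \<le> k * to_chain k l e l"
    unfolding to_chain_last to_chain_upto[OF \<open>1 \<le> l\<close> order_refl] .
  moreover have "to_chain k l e (Suc i) \<le> to_chain k l e i" if "i \<in> {1..<l}" for i
    using that M_antitone[of i] to_chain_upto[of i e] to_chain_upto[of "Suc i" e] by simp
  ultimately show ?thesis
    unfolding chain_exponents_def to_chain_def by simp
qed

lemma chain_weight_to_chain:
  assumes "e \<in> powerful_exponents k l"
  shows "chain_weight k l (to_chain k l e) = powerful_weight k l e"
proof -
  let ?t = "powerful_quotient k l e" and ?c = "carry k (e 1)" and ?M = "powerful_levels k l e"
  have "chain_weight k l (to_chain k l e) = (\<Sum>i\<in>{1..l}. k * (?M i + ?c)) + (k * ?M (Suc l) + e 1 mod k)"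
    unfolding chain_weight_def to_chain_last using to_chain_upto by simp
  also have "\<dots> = k * (\<Sum>i\<in>{1..Suc l}. ?M i) + ?c * (l * k) + e 1 mod k"
    by (simp add: sum.distrib sum_distrib_left algebra_simps)
  also have "(\<Sum>i\<in>{1..Suc l}. ?M i) = (\<Sum>j\<in>{1..Suc l}. j * (e(1 := ?t)) j)"
    unfolding powerful_levels_def using sum_tail_sums[where N = "Suc l" and f = "e(1 := ?t)"] by simp
  also have "\<dots> = ?t + (\<Sum>j\<in>{2..Suc l}. j * e j)"
    by (subst sum.atLeast_Suc_atMost) (auto simp: numeral_2_eq_2 intro!: sum.cong)
  also have "k * (?t + (\<Sum>j\<in>{2..Suc l}. j * e j)) + ?c * (l * k) + e 1 mod k =
      (k * ?t + ?c * (l * k) + e 1 mod k) + (\<Sum>j\<in>{2..Suc l}. j * k * e j)"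
    by (simp add: algebra_simps sum_distrib_left)
  also have "k * ?t + ?c * (l * k) + e 1 mod k = e 1"
    using assms step_powerful_exponent_decompose[of "e 1"]
    unfolding powerful_exponents_def powerful_quotient_def by simp
  finally show ?thesis
    unfolding powerful_weight_def .
qed

end

end

section \<open>The Dirichlet series identity\<close>

definition factor_sets :: "nat \<Rightarrow> nat \<Rightarrow> nat \<Rightarrow> nat set" where
  "factor_sets k l j = (if j = 1 then {n. step_powerful k l n} else {1..})"

definition factor_exponent :: "nat \<Rightarrow> nat \<Rightarrow> nat" where
  "factor_exponent k j = (if j = 1 then 1 else j * k)"

lemma PiE_factor_sets_eq:
  "PiE {1..Suc l} (factor_sets k l) = tuples_with_exponents {1..Suc l} (powerful_exponents k l)"
proof (intro set_eqI)
  fix g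
  have "g \<in> PiE {1..Suc l} (factor_sets k l) \<longleftrightarrow>
      g \<in> {1..Suc l} \<rightarrow>\<^sub>E {1..} \<and> step_powerful k l (g 1)"
    by (auto simp: PiE_def Pi_def factor_sets_def step_powerful_def Suc_le_eq split: if_splits)
  also have "\<dots> \<longleftrightarrow> g \<in> tuples_with_exponents {1..Suc l} (powerful_exponents k l)"
    by (auto simp: tuples_with_exponents_def powerful_exponents_def exponent_vector_def
        step_powerful_def step_powerful_exponent_def PiE_def Pi_def Suc_le_eq)
  finally show "g \<in> PiE {1..Suc l} (factor_sets k l) \<longleftrightarrow>
      g \<in> tuples_with_exponents {1..Suc l} (powerful_exponents k l)" .
qed

lemma tuples_eq_tuples_with_exponents:
  assumes "k > 0" "l > 0"
  shows "tuples k l = tuples_with_exponents {1..Suc l} (chain_exponents k l)"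
proof (intro set_eqI)
  fix n
  let ?I = "{1..Suc l}"
  show "n \<in> tuples k l \<longleftrightarrow> n \<in> tuples_with_exponents ?I (chain_exponents k l)"
  proof (cases "n \<in> ?I \<rightarrow>\<^sub>E {1..}")
    case True
    then have pos: "n i \<noteq> 0" if "i \<in> ?I" for i
      using that by (auto simp: PiE_def Pi_def Suc_le_eq)
    have last: "n (Suc l) dvd n l ^ k \<longleftrightarrow>
        (\<forall>p. prime p \<longrightarrow> multiplicity p (n (Suc l)) \<le> k * multiplicity p (n l))"
      using pos[of l] pos[of "Suc l"] assms
      by (simp add: dvd_iff_multiplicity_le prime_elem_multiplicity_power_distrib)
    have step: "n (Suc i) ^ k dvd n i ^ k \<longleftrightarrow>
        (\<forall>p. prime p \<longrightarrow> multiplicity p (n (Suc i)) \<le> multiplicity p (n i))" if "i \<in> {1..<l}" for i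
      unfolding pow_divides_pow_iff[OF assms(1)] using that pos[of i] pos[of "Suc i"]
      by (simp add: dvd_iff_multiplicity_le)
    have "(\<forall>i\<in>{2..l}. n i ^ k dvd n (i - 1) ^ k) \<longleftrightarrow> (\<forall>i\<in>{1..<l}. n (Suc i) ^ k dvd n i ^ k)"
      using ball_Suc_atLeastAtMost[of 1 l "\<lambda>i. n i ^ k dvd n (i - 1) ^ k"] by (simp add: numeral_2_eq_2)
    then have "n \<in> tuples k l \<longleftrightarrow>
        n (Suc l) dvd n l ^ k \<and> (\<forall>i\<in>{1..<l}. n (Suc i) ^ k dvd n i ^ k)"
      using True unfolding tuples_def by blast
    also have "\<dots> \<longleftrightarrow> (\<forall>p. prime p \<longrightarrow> exponent_vector ?I p n \<in> chain_exponents k l)"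
      using assms(2) by (auto simp: last step chain_exponents_def exponent_vector_def)
    finally show ?thesis
      using True by (simp add: tuples_with_exponents_def)
  qed (simp add: tuples_def tuples_with_exponents_def)
qed

lemma multiplicity_chain_product:
  assumes "n \<in> {1..Suc l} \<rightarrow>\<^sub>E {1..}" "prime p"
  shows "multiplicity p ((\<Prod>i\<in>{1..l}. n i ^ k) * n (Suc l)) =
    chain_weight k l (exponent_vector {1..Suc l} p n)"
proof -
  have pos: "n i \<noteq> 0" if "i \<in> {1..Suc l}" for i
    using assms(1) that by (auto simp: PiE_def Pi_def Suc_le_eq)
  then have "multiplicity p ((\<Prod>i\<in>{1..l}. n i ^ k) * n (Suc l)) =
      multiplicity p (\<Prod>i\<in>{1..l}. n i ^ k) + multiplicity p (n (Suc l))"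
    using assms(2) by (intro prime_elem_multiplicity_mult_distrib) auto
  also have "multiplicity p (\<Prod>i\<in>{1..l}. n i ^ k) = (\<Sum>i\<in>{1..l}. k * multiplicity p (n i))"
    using pos assms(2) by (intro multiplicity_prod_power) auto
  finally show ?thesis
    unfolding chain_weight_def exponent_vector_def by simp
qed

lemma multiplicity_factor_product:
  assumes "g \<in> {1..Suc l} \<rightarrow>\<^sub>E {1..}" "prime p"
  shows "multiplicity p (\<Prod>j\<in>{1..Suc l}. g j ^ factor_exponent k j) =
    powerful_weight k l (exponent_vector {1..Suc l} p g)"
proof -
  have "multiplicity p (\<Prod>j\<in>{1..Suc l}. g j ^ factor_exponent k j) =
      (\<Sum>j\<in>{1..Suc l}. factor_exponent k j * multiplicity p (g j))"
    using assms by (intro multiplicity_prod_power) (auto simp: PiE_def Pi_def Suc_le_eq)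
  also have "\<dots> = multiplicity p (g 1) + (\<Sum>j\<in>{2..Suc l}. j * k * multiplicity p (g j))"
    by (subst sum.atLeast_Suc_atMost) (auto simp: factor_exponent_def numeral_2_eq_2 intro!: sum.cong)
  finally show ?thesis
    unfolding powerful_weight_def exponent_vector_def by simp
qed

lemma chain_product_lift_to_chain:
  assumes "k > 0" "l > 0" "g \<in> tuples_with_exponents {1..Suc l} (powerful_exponents k l)"
  defines "n \<equiv> lift_exponent_map {1..Suc l} (to_chain k l) g"
  shows "(\<Prod>i\<in>{1..l}. n i ^ k) * n (Suc l) = (\<Prod>j\<in>{1..Suc l}. g j ^ factor_exponent k j)"
proof (rule multiplicity_eq_nat)
  have n: "n \<in> {1..Suc l} \<rightarrow>\<^sub>E {1..}"
    unfolding n_def by (rule lift_exponent_map_in_PiE) simp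
  have g: "g \<in> {1..Suc l} \<rightarrow>\<^sub>E {1..}"
    using assms(3) by (simp add: tuples_with_exponents_def)
  show "(\<Prod>i\<in>{1..l}. n i ^ k) * n (Suc l) > 0" "(\<Prod>j\<in>{1..Suc l}. g j ^ factor_exponent k j) > 0"
    using n g by (auto simp: PiE_def Pi_def Suc_le_eq intro!: prod_pos)
  fix p :: nat assume p: "prime p"
  have "exponent_vector {1..Suc l} p g \<in> powerful_exponents k l"
    using assms(3) p by (simp add: tuples_with_exponents_def)
  moreover have "exponent_vector {1..Suc l} p n = to_chain k l (exponent_vector {1..Suc l} p g)"
    unfolding n_def using exponent_map_to_chain g p
    by (simp add: exponent_vector_lift_exponent_map)
  ultimately show "multiplicity p ((\<Prod>i\<in>{1..l}. n i ^ k) * n (Suc l)) =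
      multiplicity p (\<Prod>j\<in>{1..Suc l}. g j ^ factor_exponent k j)"
    using multiplicity_chain_product[OF n p] multiplicity_factor_product[OF g p]
      chain_weight_to_chain[OF assms(1,2)] by simp
qed

lemma bij_betw_lift_to_chain:
  assumes "k > 0" "l > 0"
  shows "bij_betw (lift_exponent_map {1..Suc l} (to_chain k l))
    (tuples_with_exponents {1..Suc l} (powerful_exponents k l)) (tuples k l)"
  unfolding tuples_eq_tuples_with_exponents[OF assms]
proof (rule bij_betw_lift_exponent_map)
  show "exponent_map {1..Suc l} (to_chain k l)" "exponent_map {1..Suc l} (to_powerful k l)"
    by (rule exponent_map_to_chain, rule exponent_map_to_powerful)
qed (use assms in \<open>auto simp: to_chain_in_chain_exponents to_powerful_in_powerful_exponents
  to_chain_to_powerful to_powerful_to_chain\<close>)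

lemma prod_factor_series_eq:
  "(\<Prod>j\<in>{1..Suc l}. \<Sum>\<^sub>\<infinity>n\<in>factor_sets k l j.
      (of_nat n :: complex) powr - (of_nat (factor_exponent k j) * s))
     = F k l s * (\<Prod>j\<in>{2..Suc l}. zeta (of_nat (j * k) * s))"
proof -
  let ?h = "\<lambda>j. \<Sum>\<^sub>\<infinity>n\<in>factor_sets k l j. (of_nat n :: complex) powr - (of_nat (factor_exponent k j) * s)"
  have "(\<Prod>j\<in>{1..Suc l}. ?h j) = ?h 1 * (\<Prod>j\<in>{2..Suc l}. ?h j)"
    by (simp add: prod.atLeast_Suc_atMost numeral_2_eq_2)
  also have "?h 1 = F k l s"
    unfolding factor_sets_def factor_exponent_def F_def by simp
  also have "(\<Prod>j\<in>{2..Suc l}. ?h j) = (\<Prod>j\<in>{2..Suc l}. zeta (of_nat (j * k) * s))"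
    by (intro prod.cong) (auto simp: factor_sets_def factor_exponent_def zeta_def)
  finally show ?thesis .
qed

lemma summable_on_norm_factor_term:
  assumes "k > 0" "j \<ge> 1" "Re s > 1"
  shows "(\<lambda>n. norm ((of_nat n :: complex) powr - (of_nat (factor_exponent k j) * s))) summable_on A"
proof -
  have "1 \<le> real (factor_exponent k j)"
    using assms by (simp add: factor_exponent_def)
  then have "Re s \<le> real (factor_exponent k j) * Re s"
    using mult_right_mono[of 1 _ "Re s"] assms(3) by simp
  then have "1 < real (factor_exponent k j) * Re s"
    using assms(3) by linarith
  then show ?thesis
    by (intro summable_on_norm_of_nat_powr) simp
qed

lemma has_sum_factor_series:
  assumes "k > 0" "Re s > 1"
  shows "((\<lambda>g. \<Prod>j\<in>{1..Suc l}. (of_nat (g j) :: complex) powr - (of_nat (factor_exponent k j) * s))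
    has_sum (F k l s * (\<Prod>j\<in>{2..Suc l}. zeta (of_nat (j * k) * s))))
    (tuples_with_exponents {1..Suc l} (powerful_exponents k l))"
  unfolding PiE_factor_sets_eq[symmetric] prod_factor_series_eq[symmetric]
  using assms by (intro has_sum_prod_PiE summable_on_norm_factor_term) auto

lemma chain_term_lift_to_chain:
  assumes "k > 0" "l > 0" "g \<in> tuples_with_exponents {1..Suc l} (powerful_exponents k l)"
  defines "n \<equiv> lift_exponent_map {1..Suc l} (to_chain k l) g"
  shows "(of_nat ((\<Prod>i\<in>{1..l}. n i ^ k) * n (Suc l)) :: complex) powr - s =
    (\<Prod>j\<in>{1..Suc l}. of_nat (g j) powr - (of_nat (factor_exponent k j) * s))"
proof -
  have "\<And>j. j \<in> {1..Suc l} \<Longrightarrow> g j > 0"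
    using assms(3) by (auto simp: tuples_with_exponents_def PiE_def Pi_def Suc_le_eq)
  then have "(of_nat (\<Prod>j\<in>{1..Suc l}. g j ^ factor_exponent k j) :: complex) powr - s =
      (\<Prod>j\<in>{1..Suc l}. of_nat (g j) powr (of_nat (factor_exponent k j) * - s))"
    by (intro of_nat_prod_power_powr) auto
  then show ?thesis
    unfolding n_def chain_product_lift_to_chain[OF assms(1-3)] by simp
qed

theorem theorem10:
  fixes k l :: nat and s :: complex
  assumes "k > 0" and "l > 0" and "Re s > 1"
  shows "((\<lambda>n. of_nat ((\<Prod>i\<in>{1..l}. n i ^ k) * n (Suc l)) powr (-s)) has_sum
           (F k l s * (\<Prod>j\<in>{2..Suc l}. zeta (of_nat (j * k) * s)))) (tuples k l)"
proof -
  let ?G = "tuples_with_exponents {1..Suc l} (powerful_exponents k l)"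
    and ?L = "lift_exponent_map {1..Suc l} (to_chain k l)"
    and ?a = "\<lambda>n. of_nat ((\<Prod>i\<in>{1..l}. n i ^ k) * n (Suc l)) powr (-s) :: complex"
    and ?S = "F k l s * (\<Prod>j\<in>{2..Suc l}. zeta (of_nat (j * k) * s))"
  have "((\<lambda>g. ?a (?L g)) has_sum ?S) ?G \<longleftrightarrow>
      ((\<lambda>g. \<Prod>j\<in>{1..Suc l}. of_nat (g j) powr - (of_nat (factor_exponent k j) * s)) has_sum ?S) ?G"
    by (rule has_sum_cong) (rule chain_term_lift_to_chain[OF assms(1,2)])
  with has_sum_factor_series[OF assms(1,3)] have "((\<lambda>g. ?a (?L g)) has_sum ?S) ?G"
    by simp
  then show ?thesis
    by (rule has_sum_reindex_bij_betw[OF bij_betw_lift_to_chain[OF assms(1,2)], of ?a, THEN iffD1])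
qed

end
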